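(* Let $\mathbb{X}$ be a uniformly smooth Banach space and $\delta>0$. Suppose $V\subset\mathbb{X}$ is a $\delta$-separated set with $\#V\geq2$ and there exist a line $L$ and a number $0\leq\alpha\leq43/1224$ such that $\mathrm{dist}(x,L)\leq\alpha\delta$ for all $x\in V$. Then for all $v_1,v_2\in V$, $$|\Pi_L(v_1)-\Pi_L(v_2)|\leq|v_1-v_2|\leq\bigl(1+\rho_{\mathbb{X}}(102\alpha)\bigr)|\Pi_L(v_1)-\Pi_L(v_2)|.$$
   Context: All Banach spaces are real; a line is a one-dimensional affine subspace. $V$ is $\delta$-separated if $|v-w|\geq\delta$ for distinct $v,w\in V$. The modulus of smoothness is $\rho_{\mathbb{X}}(t)=\sup_{|x|=1,|y|=t}\tfrac12(|x+y|+|x-y|)-1$; $\mathbb{X}$ is uniformly smooth if $\rho_{\mathbb{X}}(t)/t\to0$ as $t\to0$. In a uniformly smooth space the normalized duality mapping $J:\mathbb{X}\to\mathbb{X}^*$ (with $|J(x)|_{\mathbb{X}^*}=|x|$, $\langle J(x),x\rangle=|x|^2$) is unique. For a one-dimensional linear subspace $L$, the $J$-projection is $\Pi_L(x)=\langle J(v),x\rangle v$ with $v\in L$, $|v|=1$; for an affine line $L$ and $q\in L$, $\Pi_L(x)=q+\Pi_{L-q}(x-q)$. *)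

theory Defs
  imports "HOL-Analysis.Analysis"
begin

definition mod_smooth :: "'a::real_normed_vector itself \<Rightarrow> real \<Rightarrow> real" where
  "mod_smooth _ t = Sup {(norm (x + y) + norm (x - y)) / 2 - 1 | x y :: 'a. norm x = 1 \<and> norm y = t}"

definition uniformly_smooth :: "'a::real_normed_vector itself \<Rightarrow> bool" where
  "uniformly_smooth T \<longleftrightarrow> ((\<lambda>t. mod_smooth T t / t) \<longlongrightarrow> 0) (at_right 0)"

definition is_duality :: "('a::real_normed_vector \<Rightarrow>\<^sub>L real) \<Rightarrow> 'a \<Rightarrow> bool" where
  "is_duality f x \<longleftrightarrow> norm f = norm x \<and> blinfun_apply f x = (norm x)\<^sup>2"

text \<open>Normalized duality mapping (unique in uniformly smooth spaces).\<close>
definition duality_map :: "'a::real_normed_vector \<Rightarrow> ('a \<Rightarrow>\<^sub>L real)" where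
  "duality_map x = (SOME f. is_duality f x)"

definition line :: "'a::real_normed_vector \<Rightarrow> 'a \<Rightarrow> 'a set" where
  "line q u = range (\<lambda>s::real. q + s *\<^sub>R u)"

definition J_proj :: "'a::real_normed_vector \<Rightarrow> 'a \<Rightarrow> 'a \<Rightarrow> 'a" where
  "J_proj q u x = q + (blinfun_apply (duality_map u) (x - q)) *\<^sub>R u"

end

(*
  In a uniformly smooth space the one-sided directional derivative of the norm at a unit
  vector u is linear, so it is a duality functional f for u, and
  Pi_L(v1) - Pi_L(v2) = f(v1 - v2) u.  The first inequality is just |f| <= 1.  For the second,
  write v1 - v2 = t u + z with f z = 0: closeness to L gives |z| <= 4 alpha delta and
  separation gives |t| >= (1 - 4 alpha) delta, hence |z| <= 51 alpha |t|.  It remains to see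
  |u + y| <= 1 + rho(2 s) whenever f y = 0 and |y| <= s: the vector Y = (2 s / |y|) y satisfies
  |u + Y|, |u - Y| >= f u = 1, so |u + Y| - 1 <= 2 rho(2 s), and u + y lies on the segment
  from u to u + Y at most halfway, where the norm is convex.
*)

theory Submission
  imports Defs
begin

definition norm_slope :: "'a::real_normed_vector \<Rightarrow> 'a \<Rightarrow> real \<Rightarrow> real" where
  "norm_slope u h \<tau> = (norm (u + \<tau> *\<^sub>R h) - norm u) / \<tau>"

definition norm_dir_deriv :: "'a::real_normed_vector \<Rightarrow> 'a \<Rightarrow> real" where
  "norm_dir_deriv u h = Inf (norm_slope u h ` {0<..})"

lemma norm_slope_ge:
  assumes "\<tau> > 0" shows "- norm h \<le> norm_slope u h \<tau>"
proof -
  have "norm u \<le> norm (u + \<tau> *\<^sub>R h) + \<tau> * norm h"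
    using norm_triangle_ineq4[of "u + \<tau> *\<^sub>R h" "\<tau> *\<^sub>R h"] assms by simp
  thus ?thesis unfolding norm_slope_def using assms by (simp add: pos_le_divide_eq algebra_simps)
qed

lemma norm_slope_le:
  assumes "\<tau> > 0" shows "norm_slope u h \<tau> \<le> norm h"
proof -
  have "norm (u + \<tau> *\<^sub>R h) \<le> norm u + \<tau> * norm h"
    using norm_triangle_ineq[of u "\<tau> *\<^sub>R h"] assms by simp
  thus ?thesis unfolding norm_slope_def using assms by (simp add: pos_divide_le_eq algebra_simps)
qed

lemma norm_slope_mono:
  assumes "0 < \<sigma>" "\<sigma> \<le> \<tau>" shows "norm_slope u h \<sigma> \<le> norm_slope u h \<tau>"
proof -
  define c where "c = \<sigma> / \<tau>"
  have c: "0 < c" "c \<le> 1" using assms by (auto simp: c_def)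
  have "u + \<sigma> *\<^sub>R h = (1 - c) *\<^sub>R u + c *\<^sub>R (u + \<tau> *\<^sub>R h)"
    using assms by (simp add: c_def algebra_simps)
  hence "norm (u + \<sigma> *\<^sub>R h) \<le> (1 - c) * norm u + c * norm (u + \<tau> *\<^sub>R h)"
    using norm_triangle_ineq[of "(1 - c) *\<^sub>R u" "c *\<^sub>R (u + \<tau> *\<^sub>R h)"] c by simp
  hence "norm (u + \<sigma> *\<^sub>R h) - norm u \<le> c * (norm (u + \<tau> *\<^sub>R h) - norm u)"
    by (simp add: algebra_simps)
  hence "(norm (u + \<sigma> *\<^sub>R h) - norm u) / \<sigma> \<le> c * (norm (u + \<tau> *\<^sub>R h) - norm u) / \<sigma>"
    using assms by (simp add: divide_right_mono)
  also have "\<dots> = (norm (u + \<tau> *\<^sub>R h) - norm u) / \<tau>" using assms by (simp add: c_def)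
  finally show ?thesis unfolding norm_slope_def .
qed

lemma norm_slope_add_le:
  assumes "\<tau> > 0"
  shows "norm_slope u (h + k) \<tau> \<le> norm_slope u h (2 * \<tau>) + norm_slope u k (2 * \<tau>)"
proof -
  have "u + \<tau> *\<^sub>R (h + k) = (1/2) *\<^sub>R (u + (2*\<tau>) *\<^sub>R h) + (1/2) *\<^sub>R (u + (2*\<tau>) *\<^sub>R k)"
    by (simp add: algebra_simps flip: scaleR_2)
  hence "norm (u + \<tau> *\<^sub>R (h + k)) \<le> (norm (u + (2*\<tau>) *\<^sub>R h) + norm (u + (2*\<tau>) *\<^sub>R k)) / 2"
    using norm_triangle_ineq[of "(1/2) *\<^sub>R (u + (2*\<tau>) *\<^sub>R h)" "(1/2) *\<^sub>R (u + (2*\<tau>) *\<^sub>R k)"]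
    by simp
  hence "(norm (u + \<tau> *\<^sub>R (h + k)) - norm u) / \<tau>
      \<le> ((norm (u + (2*\<tau>) *\<^sub>R h) + norm (u + (2*\<tau>) *\<^sub>R k)) / 2 - norm u) / \<tau>"
    using assms by (intro divide_right_mono) auto
  also have "\<dots> = norm_slope u h (2 * \<tau>) + norm_slope u k (2 * \<tau>)"
    unfolding norm_slope_def using assms by (simp add: field_simps)
  finally show ?thesis unfolding norm_slope_def .
qed

lemma norm_slope_scaleR:
  assumes "c > 0" shows "norm_slope u (c *\<^sub>R h) \<tau> = c * norm_slope u h (c * \<tau>)"
  using assms by (simp add: norm_slope_def mult.commute)

lemma norm_dir_deriv_le_slope:
  assumes "\<tau> > 0" shows "norm_dir_deriv u h \<le> norm_slope u h \<tau>"
  unfolding norm_dir_deriv_def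
  by (rule cInf_lower) (use assms norm_slope_ge in \<open>auto intro!: bdd_belowI2\<close>)

lemma norm_dir_deriv_greatest:
  assumes "\<And>\<tau>. \<tau> > 0 \<Longrightarrow> c \<le> norm_slope u h \<tau>" shows "c \<le> norm_dir_deriv u h"
  unfolding norm_dir_deriv_def by (rule cInf_greatest) (use assms in auto)

lemma abs_norm_dir_deriv_le: "\<bar>norm_dir_deriv u h\<bar> \<le> norm h"
  using norm_dir_deriv_le_slope[of 1 u h] norm_slope_le[of 1 u h]
    norm_dir_deriv_greatest[of "- norm h" u h] norm_slope_ge[of _ h u]
  by force

lemma norm_dir_deriv_self: "norm_dir_deriv u u = norm u"
proof (rule antisym)
  have slope: "norm_slope u u \<tau> = norm u" if "\<tau> > 0" for \<tau>
  proof -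
    have "norm (u + \<tau> *\<^sub>R u) = (1 + \<tau>) * norm u"
      by (metis abs_of_pos add_pos_pos norm_scaleR scaleR_add_left scaleR_one zero_less_one that)
    thus ?thesis using that by (simp add: norm_slope_def algebra_simps)
  qed
  show "norm_dir_deriv u u \<le> norm u" using norm_dir_deriv_le_slope[of 1 u u] slope[of 1] by simp
  show "norm u \<le> norm_dir_deriv u u" by (rule norm_dir_deriv_greatest) (simp add: slope)
qed

lemma norm_dir_deriv_0 [simp]: "norm_dir_deriv u 0 = 0"
  using norm_dir_deriv_le_slope[of 1 u 0] norm_dir_deriv_greatest[of 0 u 0]
  by (simp add: norm_slope_def)

lemma norm_dir_deriv_add_le: "norm_dir_deriv u (h + k) \<le> norm_dir_deriv u h + norm_dir_deriv u k"
proof -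
  have le: "norm_dir_deriv u (h + k) \<le> norm_slope u h s + norm_slope u k s'" if "s > 0" "s' > 0" for s s'
  proof -
    define \<tau> where "\<tau> = min s s' / 2"
    have \<tau>: "\<tau> > 0" "2 * \<tau> \<le> s" "2 * \<tau> \<le> s'" using that by (auto simp: \<tau>_def)
    have "norm_dir_deriv u (h + k) \<le> norm_slope u (h + k) \<tau>"
      by (rule norm_dir_deriv_le_slope[OF \<tau>(1)])
    also have "\<dots> \<le> norm_slope u h (2 * \<tau>) + norm_slope u k (2 * \<tau>)"
      by (rule norm_slope_add_le[OF \<tau>(1)])
    also have "\<dots> \<le> norm_slope u h s + norm_slope u k s'"
      using norm_slope_mono[OF _ \<tau>(2), of u h] norm_slope_mono[OF _ \<tau>(3), of u k] \<tau>(1) by simp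
    finally show ?thesis .
  qed
  have "norm_dir_deriv u (h + k) - norm_slope u k s' \<le> norm_dir_deriv u h" if "s' > 0" for s'
    by (rule norm_dir_deriv_greatest) (use le that in force)
  hence "norm_dir_deriv u (h + k) - norm_dir_deriv u h \<le> norm_dir_deriv u k"
    by (intro norm_dir_deriv_greatest) (force simp: algebra_simps)
  thus ?thesis by simp
qed

lemma norm_dir_deriv_scaleR_pos:
  assumes "c > 0" shows "norm_dir_deriv u (c *\<^sub>R h) = c * norm_dir_deriv u h"
proof -
  have ge: "c * norm_dir_deriv u h \<le> norm_dir_deriv u (c *\<^sub>R h)" if "c > 0" for c h
  proof (rule norm_dir_deriv_greatest)
    fix \<tau> :: real assume "\<tau> > 0"
    thus "c * norm_dir_deriv u h \<le> norm_slope u (c *\<^sub>R h) \<tau>"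
      using norm_dir_deriv_le_slope[of "c * \<tau>" u h] that by (simp add: norm_slope_scaleR)
  qed
  have "inverse c * norm_dir_deriv u (c *\<^sub>R h) \<le> norm_dir_deriv u h"
    using ge[of "inverse c" "c *\<^sub>R h"] assms by simp
  thus ?thesis using ge[OF assms, of h] assms by (simp add: field_simps)
qed

lemma mod_smooth_ge:
  fixes x y :: "'a::real_normed_vector"
  assumes "norm x = 1"
  shows "(norm (x + y) + norm (x - y)) / 2 - 1 \<le> mod_smooth TYPE('a) (norm y)"
  unfolding mod_smooth_def
proof (rule cSup_upper)
  let ?S = "{(norm (a + b) + norm (a - b)) / 2 - 1 |a b :: 'a. norm a = 1 \<and> norm b = norm y}"
  show "(norm (x + y) + norm (x - y)) / 2 - 1 \<in> ?S" using assms by blast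
  have "(norm (a + b) + norm (a - b)) / 2 - 1 \<le> norm y" if "norm a = 1" "norm b = norm y" for a b :: 'a
    using norm_triangle_ineq[of a b] norm_triangle_ineq4[of a b] that by (simp add: field_simps)
  thus "bdd_above ?S" by (auto intro!: bdd_aboveI[of _ "norm y"])
qed

lemma mod_smooth_nonneg:
  fixes u :: "'a::real_normed_vector"
  assumes "norm u = 1" "s \<ge> 0" shows "0 \<le> mod_smooth TYPE('a) s"
proof -
  have "2 = norm ((u + s *\<^sub>R u) + (u - s *\<^sub>R u))"
    using assms(1) by (simp flip: scaleR_2)
  also have "\<dots> \<le> norm (u + s *\<^sub>R u) + norm (u - s *\<^sub>R u)" by (rule norm_triangle_ineq)
  finally have "0 \<le> (norm (u + s *\<^sub>R u) + norm (u - s *\<^sub>R u)) / 2 - 1" by simp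
  also have "\<dots> \<le> mod_smooth TYPE('a) s"
    using mod_smooth_ge[OF assms(1), of "s *\<^sub>R u"] assms by simp
  finally show ?thesis .
qed

lemma norm_dir_deriv_add_uminus_le:
  fixes u :: "'a::real_normed_vector"
  assumes u: "norm u = 1" and smooth: "uniformly_smooth TYPE('a)"
  shows "norm_dir_deriv u h + norm_dir_deriv u (- h) \<le> 0"
proof (cases "h = 0")
  case False
  let ?\<rho> = "\<lambda>t. mod_smooth TYPE('a) t / t"
  have h: "norm h > 0" using False by simp
  have bound: "norm_dir_deriv u h + norm_dir_deriv u (- h) \<le> 2 * norm h * ?\<rho> (\<tau> * norm h)"
    if \<tau>: "\<tau> > 0" for \<tau>
  proof -
    have "norm_dir_deriv u h + norm_dir_deriv u (- h) \<le> norm_slope u h \<tau> + norm_slope u (- h) \<tau>"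
      using norm_dir_deriv_le_slope[OF \<tau>] add_mono by blast
    also have "\<dots> = 2 * ((norm (u + \<tau> *\<^sub>R h) + norm (u - \<tau> *\<^sub>R h)) / 2 - 1) / \<tau>"
      unfolding norm_slope_def using u \<tau> by (simp add: field_simps)
    also have "\<dots> \<le> 2 * mod_smooth TYPE('a) (\<tau> * norm h) / \<tau>"
      using mod_smooth_ge[OF u, of "\<tau> *\<^sub>R h"] \<tau> by (intro divide_right_mono) (auto simp: field_simps)
    also have "\<dots> = 2 * norm h * ?\<rho> (\<tau> * norm h)"
      using h by (simp add: field_simps)
    finally show ?thesis .
  qed
  have scale: "filterlim (\<lambda>\<tau>. \<tau> * norm h) (at_right 0) (at_right 0)"
    unfolding filterlim_at using h
    by (auto intro!: tendsto_mult_left_zero tendsto_ident_at eventually_mono[OF eventually_at_right_less])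
  have "((\<lambda>\<tau>. ?\<rho> (\<tau> * norm h)) \<longlongrightarrow> 0) (at_right 0)"
    using filterlim_compose[OF smooth[unfolded uniformly_smooth_def] scale] .
  from tendsto_mult_left[OF this, of "2 * norm h"]
  have "((\<lambda>\<tau>. 2 * norm h * ?\<rho> (\<tau> * norm h)) \<longlongrightarrow> 0) (at_right 0)"
    by (simp only: mult_zero_right)
  moreover have "\<forall>\<^sub>F \<tau> in at_right 0.
      norm_dir_deriv u h + norm_dir_deriv u (- h) \<le> 2 * norm h * ?\<rho> (\<tau> * norm h)"
    using eventually_at_right_less by (rule eventually_mono) (rule bound)
  ultimately show ?thesis
    by (rule tendsto_lowerbound) (rule trivial_limit_at_right_real)
qed simp

lemma norm_dir_deriv_uminus:
  fixes u :: "'a::real_normed_vector"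
  assumes "norm u = 1" and "uniformly_smooth TYPE('a)"
  shows "norm_dir_deriv u (- h) = - norm_dir_deriv u h"
  using norm_dir_deriv_add_le[of u h "- h"] norm_dir_deriv_add_uminus_le[OF assms, of h] by simp

lemma bounded_linear_norm_dir_deriv:
  fixes u :: "'a::real_normed_vector"
  assumes u: "norm u = 1" and smooth: "uniformly_smooth TYPE('a)"
  shows "bounded_linear (norm_dir_deriv u)"
proof (rule bounded_linear_intro[where K = 1])
  fix x y
  show "norm_dir_deriv u (x + y) = norm_dir_deriv u x + norm_dir_deriv u y"
    using norm_dir_deriv_add_le[of u x y] norm_dir_deriv_add_le[of u "- x" "- y"]
      norm_dir_deriv_uminus[OF u smooth, of "x + y"]
    by (simp add: norm_dir_deriv_uminus[OF u smooth])
next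
  fix r :: real and x
  show "norm_dir_deriv u (r *\<^sub>R x) = r *\<^sub>R norm_dir_deriv u x"
  proof (cases r "0::real" rule: linorder_cases)
    case less
    hence "norm_dir_deriv u (r *\<^sub>R x) = - r * norm_dir_deriv u (- x)"
      using norm_dir_deriv_scaleR_pos[of "- r" u "- x"] by simp
    thus ?thesis by (simp add: norm_dir_deriv_uminus[OF u smooth])
  qed (simp_all add: norm_dir_deriv_scaleR_pos)
next
  fix x show "norm (norm_dir_deriv u x) \<le> norm x * 1"
    using abs_norm_dir_deriv_le by simp
qed

lemma is_duality_duality_map:
  fixes u :: "'a::real_normed_vector"
  assumes u: "norm u = 1" and smooth: "uniformly_smooth TYPE('a)"
  shows "is_duality (duality_map u) u"
  unfolding duality_map_def
proof (rule someI)
  let ?f = "Blinfun (norm_dir_deriv u)"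
  have f: "blinfun_apply ?f = norm_dir_deriv u"
    by (rule bounded_linear_Blinfun_apply[OF bounded_linear_norm_dir_deriv[OF u smooth]])
  have "norm ?f \<le> 1"
    by (rule norm_blinfun_bound) (simp_all add: f abs_norm_dir_deriv_le)
  moreover have "1 \<le> norm ?f"
    using norm_blinfun[of ?f u] u by (simp add: f norm_dir_deriv_self)
  ultimately show "is_duality ?f u"
    unfolding is_duality_def using u by (simp add: f norm_dir_deriv_self)
qed

lemma norm_add_le_mod_smooth:
  fixes u y :: "'a::real_normed_vector"
  assumes u: "norm u = 1" and f: "is_duality f u" and fy: "f y = 0" and r: "2 * norm y \<le> r"
  shows "norm (u + y) \<le> 1 + mod_smooth TYPE('a) r"
proof (cases "y = 0")
  case True
  thus ?thesis using mod_smooth_nonneg[OF u, of r] r u by simp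
next
  case False
  have fu: "f u = 1" and f_le: "\<bar>f x\<bar> \<le> norm x" for x
    using f u norm_blinfun[of f x] unfolding is_duality_def by auto
  have "0 < norm y" using False by simp
  hence "0 < r" using r by linarith
  define \<mu> where "\<mu> = norm y / r"
  have \<mu>: "0 < \<mu>" "2 * \<mu> \<le> 1" using \<open>0 < norm y\<close> \<open>0 < r\<close> r by (auto simp: \<mu>_def field_simps)
  define Y where "Y = inverse \<mu> *\<^sub>R y"
  have "norm Y = r" using \<open>0 < norm y\<close> \<open>0 < r\<close> by (simp add: Y_def \<mu>_def)
  hence \<rho>: "(norm (u + Y) + norm (u - Y)) / 2 - 1 \<le> mod_smooth TYPE('a) r"
    using mod_smooth_ge[OF u, of Y] by simp
  have "1 \<le> norm (u + Y)" "1 \<le> norm (u - Y)"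
    using f_le[of "u + Y"] f_le[of "u - Y"] fu fy
    by (simp_all add: Y_def blinfun.add_right blinfun.diff_right blinfun.scaleR_right)
  hence Y: "norm (u + Y) - 1 \<le> 2 * mod_smooth TYPE('a) r" "0 \<le> mod_smooth TYPE('a) r"
    using \<rho> by (simp_all add: field_simps)
  have "u + y = (1 - \<mu>) *\<^sub>R u + \<mu> *\<^sub>R (u + Y)"
    using \<mu> by (simp add: Y_def algebra_simps)
  hence "norm (u + y) \<le> (1 - \<mu>) + \<mu> * norm (u + Y)"
    using norm_triangle_ineq[of "(1 - \<mu>) *\<^sub>R u" "\<mu> *\<^sub>R (u + Y)"] \<mu> u by simp
  also have "\<dots> = 1 + \<mu> * (norm (u + Y) - 1)" by (simp add: algebra_simps)
  also have "\<dots> \<le> 1 + \<mu> * (2 * mod_smooth TYPE('a) r)"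
    using Y \<mu> by (simp add: mult_left_mono)
  also have "\<dots> \<le> 1 + mod_smooth TYPE('a) r"
    using Y \<mu> mult_right_mono[of "2 * \<mu>" 1 "mod_smooth TYPE('a) r"] by simp
  finally show ?thesis .
qed

lemma norm_le_mod_smooth_of_residual:
  fixes u w :: "'a::real_normed_vector"
  assumes u: "norm u = 1" and f: "is_duality f u"
    and res: "norm (w - f w *\<^sub>R u) \<le> c * \<bar>f w\<bar>" and r: "2 * c \<le> r"
  shows "norm w \<le> (1 + mod_smooth TYPE('a) r) * \<bar>f w\<bar>"
proof (cases "f w = 0")
  case True
  thus ?thesis using res by simp
next
  case False
  have fu: "f u = 1" using f u unfolding is_duality_def by simp
  define y where "y = inverse (f w) *\<^sub>R (w - f w *\<^sub>R u)"
  have w: "w = f w *\<^sub>R (u + y)" using False by (simp add: y_def algebra_simps)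
  have "f y = 0" using False fu by (simp add: y_def blinfun.diff_right blinfun.scaleR_right)
  moreover have "norm y = norm (w - f w *\<^sub>R u) / \<bar>f w\<bar>"
    by (simp add: y_def divide_inverse_commute)
  hence "norm y \<le> c"
    using res False by (simp add: pos_divide_le_eq)
  hence "2 * norm y \<le> r" using r by simp
  ultimately have "norm (u + y) \<le> 1 + mod_smooth TYPE('a) r"
    by (rule norm_add_le_mod_smooth[OF u f])
  thus ?thesis by (subst w) (simp add: mult.commute mult_left_mono)
qed

lemma J_proj_diff:
  "J_proj q u x - J_proj q u y = duality_map u (x - y) *\<^sub>R u"
  by (simp add: J_proj_def blinfun.diff_right algebra_simps)

lemma norm_J_proj_diff_le:
  assumes "norm u = 1" "is_duality (duality_map u) u"
  shows "norm (J_proj q u x - J_proj q u y) \<le> norm (x - y)"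
  using assms norm_blinfun[of "duality_map u" "x - y"]
  by (simp add: J_proj_diff is_duality_def)

lemma norm_sub_J_proj_le_infdist:
  assumes u: "norm u = 1" and f: "is_duality (duality_map u) u"
  shows "norm (x - J_proj q u x) \<le> 2 * infdist x (line q u)"
proof -
  have "norm (x - J_proj q u x) \<le> 2 * dist x a" if "a \<in> line q u" for a
  proof -
    obtain s where a: "a = q + s *\<^sub>R u" using \<open>a \<in> line q u\<close> unfolding line_def by auto
    have "x - J_proj q u x = (x - a) - duality_map u (x - a) *\<^sub>R u"
      using f u by (simp add: a J_proj_def is_duality_def blinfun.diff_right blinfun.add_right
          blinfun.scaleR_right algebra_simps)
    also have "norm \<dots> \<le> 2 * norm (x - a)"
      using norm_triangle_ineq4[of "x - a" "duality_map u (x - a) *\<^sub>R u"]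
        norm_blinfun[of "duality_map u" "x - a"] f u by (simp add: is_duality_def)
    finally show ?thesis by (simp add: dist_norm)
  qed
  moreover have "line q u \<noteq> {}" unfolding line_def by simp
  ultimately have "norm (x - J_proj q u x) / 2 \<le> infdist x (line q u)"
    unfolding infdist_notempty[OF \<open>line q u \<noteq> {}\<close>]
    by (intro cINF_greatest) (auto simp: field_simps)
  thus ?thesis by simp
qed

lemma norm_residual_le_infdist:
  assumes u: "norm u = 1" and f: "is_duality (duality_map u) u"
    and "infdist x (line q u) \<le> d" "infdist y (line q u) \<le> d"
  shows "norm ((x - y) - duality_map u (x - y) *\<^sub>R u) \<le> 4 * d"
proof -
  have "(x - y) - duality_map u (x - y) *\<^sub>R u = (x - J_proj q u x) - (y - J_proj q u y)"
    unfolding J_proj_diff[of q u x y, symmetric] by (simp add: algebra_simps)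
  hence "norm ((x - y) - duality_map u (x - y) *\<^sub>R u) \<le> norm (x - J_proj q u x) + norm (y - J_proj q u y)"
    by (metis norm_triangle_ineq4)
  also have "\<dots> \<le> 4 * d"
    using norm_sub_J_proj_le_infdist[OF u f, of x q] norm_sub_J_proj_le_infdist[OF u f, of y q] assms(3,4)
    by linarith
  finally show ?thesis .
qed

theorem mainTheorem14:
  fixes V :: "'a::banach set" and \<delta> \<alpha> :: real and q u :: 'a
  assumes smooth: "uniformly_smooth TYPE('a)"
    and delta_pos: "\<delta> > 0"
    and sep: "\<forall>v\<in>V. \<forall>w\<in>V. v \<noteq> w \<longrightarrow> norm (v - w) \<ge> \<delta>"
    and two: "\<exists>v\<in>V. \<exists>w\<in>V. v \<noteq> w"
    and unit: "norm u = 1"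
    and alpha: "0 \<le> \<alpha>" "\<alpha> \<le> 43 / 1224"
    and close: "\<forall>x\<in>V. infdist x (line q u) \<le> \<alpha> * \<delta>"
  shows "\<forall>v1\<in>V. \<forall>v2\<in>V.
     norm (J_proj q u v1 - J_proj q u v2) \<le> norm (v1 - v2) \<and>
     norm (v1 - v2) \<le> (1 + mod_smooth TYPE('a) (102 * \<alpha>)) * norm (J_proj q u v1 - J_proj q u v2)"
proof (intro ballI conjI)
  fix v1 v2 assume v1: "v1 \<in> V" and v2: "v2 \<in> V"
  let ?f = "duality_map u" and ?w = "v1 - v2"
  have f: "is_duality ?f u" by (rule is_duality_duality_map[OF unit smooth])
  show "norm (J_proj q u v1 - J_proj q u v2) \<le> norm ?w"
    by (rule norm_J_proj_diff_le[OF unit f])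
  have proj: "norm (J_proj q u v1 - J_proj q u v2) = \<bar>?f ?w\<bar>"
    using unit by (simp add: J_proj_diff)
  have res: "norm (?w - ?f ?w *\<^sub>R u) \<le> 4 * (\<alpha> * \<delta>)"
    using norm_residual_le_infdist[OF unit f] close v1 v2 by blast
  show "norm ?w \<le> (1 + mod_smooth TYPE('a) (102 * \<alpha>)) * norm (J_proj q u v1 - J_proj q u v2)"
  proof (cases "v1 = v2")
    case False
    have "\<delta> \<le> norm ?w" using sep v1 v2 False by blast
    also have "\<dots> \<le> \<bar>?f ?w\<bar> + 4 * \<alpha> * \<delta>"
      using res norm_triangle_ineq2[of ?w "?f ?w *\<^sub>R u"] unit by simp
    finally have "(1 - 4 * \<alpha>) * \<delta> \<le> \<bar>?f ?w\<bar>" by (simp add: algebra_simps)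
    \<comment> \<open>the bound on \<alpha> enters only through 4 \<le> 51 (1 - 4 \<alpha>)\<close>
    hence "4 * \<alpha> * \<delta> \<le> 51 * \<alpha> * \<bar>?f ?w\<bar>"
      using alpha delta_pos mult_left_mono[of "51 * (1 - 4 * \<alpha>) * \<delta>" "51 * \<bar>?f ?w\<bar>" \<alpha>]
        mult_right_mono[of 4 "51 * (1 - 4 * \<alpha>)" "\<alpha> * \<delta>"]
      by (simp add: algebra_simps)
    with res have "norm (?w - ?f ?w *\<^sub>R u) \<le> 51 * \<alpha> * \<bar>?f ?w\<bar>" by linarith
    thus ?thesis
      unfolding proj by (rule norm_le_mod_smooth_of_residual[OF unit f]) simp
  qed simp
qed

end
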